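(* There exist instances and a partition $\Pi$ of the players that maximizes the number of winning pools and, among all such partitions, is lexicographically optimal with respect to its sorted pool stakes (the smallest pool stake is maximized, then the second smallest, and so on), such that $\Pi$ is a Nash equilibrium under the proportional scheme but the proportional scheme is not Sybil-proof with respect to $\Pi$.
   Context: Oceanic model (including the purely atomic case with no non-atomic players): finitely many atomic players, player $i$ with stake $a_i>0$, and possibly a continuum of non-atomic players (a measurable set contributes stake equal to its measure); threshold $h>0$ with $a_i<h$. Pools partition all players; a pool $S$ has stake $m(S)$ and reward $\rho(S)=1$ if $m(S)\ge h$ (winning), else $0$. Proportional scheme: an atomic player with stake $a_i$ in pool $C$ receives $\frac{a_i}{m(C)}\rho(C)$; non-atomic players receive $\rho(C)/m(C)$ per unit of stake. A partition into winning pools is a Nash equilibrium if no atomic player can strictly increase her payment by moving to another pool or opening a new pool alone, and no non-atomic player can strictly increase her per-unit reward by moving to another pool. Sybil strategy: given $\Pi$, an atomic player $i$ splits her stake into nonnegative amounts $s_1,\dots,s_t$ summing to $a_i$ and joins $t$ distinct pools of $\Pi$ (her original pool being taken without her), contributing $s_j$ to the $j$-th as a separate atomic identity; others stay put; her payoff is the sum of the payments to her identities. The scheme is Sybil-proof with respect to $\Pi$ if no atomic player becomes strictly better off by a Sybil strategy. *)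

theory Defs
  imports Complex_Main
begin

text \<open>
An instance: atomic players 0..n-1 with stakes a i, a total mass M >= 0 of
non-atomic players (only measures matter), threshold h.
A partition: k pools labelled 0..k-1, an assignment p of atomic players to
pools, and the measure w j of non-atomic players in pool j.
\<close>

definition is_instance :: "nat \<Rightarrow> (nat \<Rightarrow> real) \<Rightarrow> real \<Rightarrow> real \<Rightarrow> bool" where
  "is_instance n a M h \<longleftrightarrow> h > 0 \<and> M \<ge> 0 \<and> (\<forall>i<n. 0 < a i \<and> a i < h)"

definition valid_partition ::
  "nat \<Rightarrow> real \<Rightarrow> nat \<Rightarrow> (nat \<Rightarrow> nat) \<Rightarrow> (nat \<Rightarrow> real) \<Rightarrow> bool" where
  "valid_partition n M k p w \<longleftrightarrow>
     (\<forall>i<n. p i < k) \<and> (\<forall>j<k. w j \<ge> 0) \<and> (\<Sum>j<k. w j) = M \<and>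
     (\<forall>j<k. (\<exists>i<n. p i = j) \<or> w j > 0)"

definition stake ::
  "nat \<Rightarrow> (nat \<Rightarrow> real) \<Rightarrow> (nat \<Rightarrow> nat) \<Rightarrow> (nat \<Rightarrow> real) \<Rightarrow> nat \<Rightarrow> real" where
  "stake n a p w j = (\<Sum>i\<in>{i. i < n \<and> p i = j}. a i) + w j"

definition num_winning ::
  "nat \<Rightarrow> (nat \<Rightarrow> real) \<Rightarrow> real \<Rightarrow> nat \<Rightarrow> (nat \<Rightarrow> nat) \<Rightarrow> (nat \<Rightarrow> real) \<Rightarrow> nat" where
  "num_winning n a h k p w = card {j. j < k \<and> stake n a p w j \<ge> h}"

definition sorted_stakes ::
  "nat \<Rightarrow> (nat \<Rightarrow> real) \<Rightarrow> nat \<Rightarrow> (nat \<Rightarrow> nat) \<Rightarrow> (nat \<Rightarrow> real) \<Rightarrow> real list" where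
  "sorted_stakes n a k p w = sort (map (stake n a p w) [0..<k])"

definition max_winning ::
  "nat \<Rightarrow> (nat \<Rightarrow> real) \<Rightarrow> real \<Rightarrow> real \<Rightarrow> nat \<Rightarrow> (nat \<Rightarrow> nat) \<Rightarrow> (nat \<Rightarrow> real) \<Rightarrow> bool" where
  "max_winning n a M h k p w \<longleftrightarrow> valid_partition n M k p w \<and>
     (\<forall>k' p' w'. valid_partition n M k' p' w' \<longrightarrow>
        num_winning n a h k' p' w' \<le> num_winning n a h k p w)"

definition lex_optimal ::
  "nat \<Rightarrow> (nat \<Rightarrow> real) \<Rightarrow> real \<Rightarrow> real \<Rightarrow> nat \<Rightarrow> (nat \<Rightarrow> nat) \<Rightarrow> (nat \<Rightarrow> real) \<Rightarrow> bool" where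
  "lex_optimal n a M h k p w \<longleftrightarrow> max_winning n a M h k p w \<and>
     (\<forall>k' p' w'. max_winning n a M h k' p' w' \<longrightarrow>
        (sorted_stakes n a k p w, sorted_stakes n a k' p' w') \<notin> lexord {(x, y). x < y})"

definition nash_equilibrium ::
  "nat \<Rightarrow> (nat \<Rightarrow> real) \<Rightarrow> real \<Rightarrow> nat \<Rightarrow> (nat \<Rightarrow> nat) \<Rightarrow> (nat \<Rightarrow> real) \<Rightarrow> bool" where
  "nash_equilibrium n a h k p w \<longleftrightarrow>
     (\<forall>j<k. stake n a p w j \<ge> h) \<and>
     \<comment> \<open>atomic player moving to another existing pool\<close>
     (\<forall>i<n. \<forall>j<k. j \<noteq> p i \<longrightarrow>
        (if stake n a p w j + a i \<ge> h then a i / (stake n a p w j + a i) else 0)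
          \<le> a i / stake n a p w (p i)) \<and>
     \<comment> \<open>atomic player opening a new pool alone\<close>
     (\<forall>i<n. (if a i \<ge> h then 1 else 0) \<le> a i / stake n a p w (p i)) \<and>
     \<comment> \<open>non-atomic players (per unit of stake)\<close>
     (\<forall>j<k. w j > 0 \<longrightarrow> (\<forall>j'<k. 1 / stake n a p w j' \<le> 1 / stake n a p w j))"

definition stake_without ::
  "nat \<Rightarrow> (nat \<Rightarrow> real) \<Rightarrow> (nat \<Rightarrow> nat) \<Rightarrow> (nat \<Rightarrow> real) \<Rightarrow> nat \<Rightarrow> nat \<Rightarrow> real" where
  "stake_without n a p w i j = (if j = p i then stake n a p w j - a i else stake n a p w j)"

text \<open>Payoff of a Sybil strategy of player i: amount s j put into pool j of the
partition (j < k); pools with s j = 0 are not joined (they contribute 0).\<close>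
definition sybil_payoff ::
  "nat \<Rightarrow> (nat \<Rightarrow> real) \<Rightarrow> real \<Rightarrow> nat \<Rightarrow> (nat \<Rightarrow> nat) \<Rightarrow> (nat \<Rightarrow> real) \<Rightarrow> nat \<Rightarrow> (nat \<Rightarrow> real) \<Rightarrow> real" where
  "sybil_payoff n a h k p w i s =
     (\<Sum>j<k. if stake_without n a p w i j + s j \<ge> h
             then s j / (stake_without n a p w i j + s j) else 0)"

definition sybil_proof ::
  "nat \<Rightarrow> (nat \<Rightarrow> real) \<Rightarrow> real \<Rightarrow> nat \<Rightarrow> (nat \<Rightarrow> nat) \<Rightarrow> (nat \<Rightarrow> real) \<Rightarrow> bool" where
  "sybil_proof n a h k p w \<longleftrightarrow>
     (\<forall>i<n. \<forall>s. (\<forall>j<k. s j \<ge> 0) \<and> (\<Sum>j<k. s j) = a i \<longrightarrow>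
        sybil_payoff n a h k p w i s \<le>
          (if stake n a p w (p i) \<ge> h then a i / stake n a p w (p i) else 0))"

end

theory Submission
  imports Defs "HOL-Library.Multiset"
begin

(*
Take four atomic players of stake 1, no non-atomic players, and threshold 3/2. Total stake 4
leaves room for at most two winning pools, and the split into two pools of stake 2 is the
balanced one, hence lexicographically optimal. Moving to the other pool would pay 1/3 < 1/2, so
the split is a Nash equilibrium. But a player who leaves 1/2 in her own pool keeps it winning at
stake 3/2 and puts the other 1/2 into the second pool, earning 1/3 + 1/5 = 8/15 > 1/2.
*)

lemma sum_stake:
  assumes "valid_partition n M k p w"
  shows "(\<Sum>j<k. stake n a p w j) = (\<Sum>i<n. a i) + M"
proof -
  have "(\<Sum>j<k. \<Sum>i\<in>{i. i < n \<and> p i = j}. a i) = (\<Sum>j<k. \<Sum>i\<in>{i\<in>{..<n}. p i = j}. a i)"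
    by (simp add: conj_commute)
  also have "\<dots> = (\<Sum>i<n. a i)"
    by (rule sum.group) (use assms in \<open>auto simp: valid_partition_def\<close>)
  finally show ?thesis
    using assms by (simp add: stake_def sum.distrib valid_partition_def)
qed

lemma stake_pos:
  assumes "valid_partition n M k p w" "\<forall>i<n. 0 < a i" "j < k"
  shows "0 < stake n a p w j"
proof -
  have atoms: "0 \<le> (\<Sum>i\<in>{i. i < n \<and> p i = j}. a i)"
    using assms(2) by (intro sum_nonneg) auto
  have "w j \<ge> 0" using assms by (auto simp: valid_partition_def)
  consider i where "i < n" "p i = j" | "0 < w j"
    using assms(1,3) unfolding valid_partition_def by blast
  then show ?thesis
  proof cases
    case (1 i)
    then have "a i \<le> (\<Sum>i\<in>{i. i < n \<and> p i = j}. a i)"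
      using assms(2) by (intro member_le_sum) auto
    with 1 assms(2) \<open>w j \<ge> 0\<close> show ?thesis unfolding stake_def by force
  next
    case 2
    with atoms show ?thesis unfolding stake_def by linarith
  qed
qed

lemma sum_list_sorted_stakes:
  "sum_list (sorted_stakes n a k p w) = (\<Sum>j<k. stake n a p w j)"
  unfolding sorted_stakes_def
  by (metis mset_sort sum_mset_sum_list interv_sum_list_conv_sum_set_nat atLeast0LessThan set_upt)

lemma num_winning_le_pools: "num_winning n a h k p w \<le> k"
  unfolding num_winning_def by (rule order_trans[OF card_mono[of "{..<k}"]]) auto

lemma num_winning_mult_threshold_le:
  assumes "valid_partition n M k p w" "\<forall>i<n. 0 < a i"
  shows "real (num_winning n a h k p w) * h \<le> (\<Sum>i<n. a i) + M"
proof -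
  let ?W = "{j. j < k \<and> h \<le> stake n a p w j}"
  have "real (card ?W) * h = (\<Sum>j\<in>?W. h)" by simp
  also have "\<dots> \<le> (\<Sum>j\<in>?W. stake n a p w j)" by (rule sum_mono) auto
  also have "\<dots> \<le> (\<Sum>j<k. stake n a p w j)"
    using stake_pos[OF assms] by (intro sum_mono2) (auto intro: less_imp_le)
  also have "\<dots> = (\<Sum>i<n. a i) + M" by (rule sum_stake[OF assms(1)])
  finally show ?thesis unfolding num_winning_def .
qed

lemma max_winningI:
  assumes "valid_partition n M k p w" "\<forall>i<n. 0 < a i" "0 < h"
    and "(\<Sum>i<n. a i) + M < real (num_winning n a h k p w + 1) * h"
  shows "max_winning n a M h k p w"
  unfolding max_winning_def
proof (intro conjI allI impI assms(1))
  fix k' p' w'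
  assume "valid_partition n M k' p' w'"
  from num_winning_mult_threshold_le[OF this assms(2), where h = h] assms(4)
  have "real (num_winning n a h k' p' w') * h < real (num_winning n a h k p w + 1) * h"
    by linarith
  with assms(3) show "num_winning n a h k' p' w' \<le> num_winning n a h k p w" by simp
qed

lemma mult_le_sum_list:
  fixes xs :: "real list"
  assumes "\<forall>x\<in>set xs. y \<le> x \<and> 0 \<le> x" "m \<le> length xs"
  shows "real m * y \<le> sum_list xs"
  using assms
proof (induction xs arbitrary: m)
  case Nil
  then show ?case by simp
next
  case (Cons x xs)
  show ?case
  proof (cases m)
    case 0
    with Cons.prems show ?thesis by (simp add: sum_list_nonneg)
  next
    case (Suc m')
    with Cons.prems have "real m' * y \<le> sum_list xs" by (intro Cons.IH) auto
    with Suc Cons.prems show ?thesis by (simp add: algebra_simps)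
  qed
qed

lemma replicate_not_lexord_sorted:
  fixes ys :: "real list"
  assumes "sorted ys" "\<forall>y\<in>set ys. 0 < y" "m \<le> length ys" "sum_list ys = real m * c"
  shows "(replicate m c, ys) \<notin> lexord {(x, y). x < y}"
  using assms
proof (induction m arbitrary: ys)
  case 0
  have "ys = []"
  proof (cases ys)
    case (Cons y ys')
    with 0 have "0 < y" by simp
    moreover have "0 \<le> sum_list ys'"
      using 0 Cons by (intro sum_list_nonneg) (simp add: less_imp_le)
    moreover have "y + sum_list ys' = 0" using Cons 0 by simp
    ultimately show ?thesis by linarith
  qed
  then show ?case by simp
next
  case (Suc m)
  then obtain y ys' where ys: "ys = y # ys'" by (cases ys) auto
  have "\<not> c < y"
  proof
    assume "c < y"
    then have "real (Suc m) * c < real (Suc m) * y" by simp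
    also have "\<dots> \<le> sum_list ys"
      using Suc.prems ys by (intro mult_le_sum_list) auto
    finally show False using Suc.prems(4) by simp
  qed
  moreover have "(replicate m c, ys') \<notin> lexord {(x, y). x < y}" if "c = y"
  proof (rule Suc.IH)
    show "sum_list ys' = real m * c"
      using Suc.prems(4) ys that by (simp add: algebra_simps)
  qed (use Suc.prems ys in auto)
  ultimately show ?case using ys by (simp add: lexord_cons_cons)
qed

lemma lex_optimalI:
  assumes max: "max_winning n a M h k p w" and pos: "\<forall>i<n. 0 < a i"
    and balanced: "\<forall>j<k. stake n a p w j = c" and winning: "h \<le> c"
  shows "lex_optimal n a M h k p w"
  unfolding lex_optimal_def
proof (intro conjI allI impI max)
  fix k' p' w'
  assume max': "max_winning n a M h k' p' w'"
  have valid: "valid_partition n M k p w" and valid': "valid_partition n M k' p' w'"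
    using max max' by (simp_all add: max_winning_def)
  have "{j. j < k \<and> h \<le> stake n a p w j} = {..<k}" using balanced winning by auto
  then have "k = num_winning n a h k p w" by (simp add: num_winning_def)
  also have "\<dots> \<le> num_winning n a h k' p' w'" using max' valid by (simp add: max_winning_def)
  also have "\<dots> \<le> k'" by (rule num_winning_le_pools)
  finally have "k \<le> k'" .
  have "map (stake n a p w) [0..<k] = map (\<lambda>_. c) [0..<k]"
    using balanced by (intro map_cong) auto
  then have ours: "sorted_stakes n a k p w = replicate k c"
    by (simp add: sorted_stakes_def map_replicate_const sorted_sort_id)
  have "sum_list (sorted_stakes n a k' p' w') = (\<Sum>j<k. stake n a p w j)"
    using sum_stake[OF valid] sum_stake[OF valid'] by (simp add: sum_list_sorted_stakes)
  also have "\<dots> = real k * c" using balanced by simp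
  finally show "(sorted_stakes n a k p w, sorted_stakes n a k' p' w') \<notin> lexord {(x, y). x < y}"
    unfolding ours using \<open>k \<le> k'\<close> stake_pos[OF valid' pos]
    by (intro replicate_not_lexord_sorted) (auto simp: sorted_stakes_def)
qed

definition two_pools :: "nat \<Rightarrow> nat" where
  "two_pools i = (if i < 2 then 0 else 1)"

lemma stake_two_pools:
  assumes "j < 2"
  shows "stake 4 (\<lambda>_. 1) two_pools (\<lambda>_. 0) j = 2"
proof -
  have "{i. i < 4 \<and> two_pools i = j} = (if j = 0 then {0, 1} else {2, 3})"
    using assms by (auto simp: two_pools_def)
  then show ?thesis by (simp add: stake_def)
qed

lemma valid_two_pools: "valid_partition 4 0 2 two_pools (\<lambda>_. 0)"
proof -
  have "\<exists>i<4. two_pools i = j" if "j < 2" for j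
    using that by (intro exI[of _ "2 * j"]) (auto simp: two_pools_def)
  then show ?thesis by (simp add: valid_partition_def two_pools_def)
qed

lemma max_winning_two_pools: "max_winning 4 (\<lambda>_. 1) 0 (3/2) 2 two_pools (\<lambda>_. 0)"
proof -
  have "{j. j < 2 \<and> 3/2 \<le> stake 4 (\<lambda>_. 1) two_pools (\<lambda>_. 0) j} = {..<2}"
    using stake_two_pools by auto
  then have "num_winning 4 (\<lambda>_. 1) (3/2) 2 two_pools (\<lambda>_. 0) = 2"
    by (simp add: num_winning_def)
  then show ?thesis by (intro max_winningI[OF valid_two_pools]) simp_all
qed

lemma lex_optimal_two_pools: "lex_optimal 4 (\<lambda>_. 1) 0 (3/2) 2 two_pools (\<lambda>_. 0)"
  by (rule lex_optimalI[OF max_winning_two_pools _ _, of 2]) (simp_all add: stake_two_pools)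

lemma nash_equilibrium_two_pools: "nash_equilibrium 4 (\<lambda>_. 1) (3/2) 2 two_pools (\<lambda>_. 0)"
proof -
  have "two_pools i < 2" for i by (simp add: two_pools_def)
  then show ?thesis by (simp add: nash_equilibrium_def stake_two_pools)
qed

lemma not_sybil_proof_two_pools: "\<not> sybil_proof 4 (\<lambda>_. 1) (3/2) 2 two_pools (\<lambda>_. 0)"
proof
  let ?halves = "\<lambda>_. 1/2 :: real"
  have "two_pools 0 = 0" by (simp add: two_pools_def)
  assume "sybil_proof 4 (\<lambda>_. 1) (3/2) 2 two_pools (\<lambda>_. 0)"
  from this[unfolded sybil_proof_def, rule_format, of 0 ?halves]
  have "sybil_payoff 4 (\<lambda>_. 1) (3/2) 2 two_pools (\<lambda>_. 0) 0 ?halves \<le> 1/2"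
    using \<open>two_pools 0 = 0\<close> by (simp add: stake_two_pools numeral_2_eq_2)
  moreover have "sybil_payoff 4 (\<lambda>_. 1) (3/2) 2 two_pools (\<lambda>_. 0) 0 ?halves = 1/3 + 1/5"
    using \<open>two_pools 0 = 0\<close> stake_two_pools[of 1]
    by (simp add: sybil_payoff_def stake_without_def stake_two_pools numeral_2_eq_2)
  ultimately show False by simp
qed

theorem theorem5p2:
  shows "\<exists>(n::nat) (a::nat \<Rightarrow> real) (M::real) (h::real) (k::nat) (p::nat \<Rightarrow> nat) (w::nat \<Rightarrow> real).
           is_instance n a M h \<and> valid_partition n M k p w \<and>
           max_winning n a M h k p w \<and> lex_optimal n a M h k p w \<and>
           nash_equilibrium n a h k p w \<and> \<not> sybil_proof n a h k p w"
proof -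
  have "is_instance 4 (\<lambda>_. 1) 0 (3/2)" by (simp add: is_instance_def)
  with valid_two_pools max_winning_two_pools lex_optimal_two_pools
    nash_equilibrium_two_pools not_sybil_proof_two_pools
  show ?thesis by blast
qed

end
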